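(* Let $G$ be a topological group and let $H\in\mathrm{RUEB}(L^0(G))$. Then $[H]\in\mathrm{RUEB}(G)$, where $$[H]=\{f\circ h_n\circ c_{i,a} : f\in H,\ n\in\mathbb N\setminus\{0\},\ i\in\{1,\dots,n\},\ a\in G^{n-1}\}.$$
   Context: For a topological group $K$, equip $K$ with its right uniformity (basic entourages $\{(x,y): xy^{-1}\in U\}$, $U$ an identity neighbourhood); $\mathrm{RUC}_b(K)$ denotes the bounded real functions on $K$ uniformly continuous for it, and $\mathrm{RUEB}(K)$ the set of subsets of $\mathrm{RUC}_b(K)$ that are norm-bounded and uniformly equicontinuous (for every $\epsilon>0$ there is an identity neighbourhood $U$ with $|f(x)-f(y)|\le\epsilon$ for all $f$ in the set and all $x,y$ with $xy^{-1}\in U$). Let $\lambda$ be Lebesgue measure on $[0,1]$. $L^{0}(G)$ is the group of $\lambda$-a.e. equivalence classes of strongly $\lambda$-measurable maps $[0,1]\to G$ (maps $f$ such that for every $\epsilon>0$ there is a closed $A$ with $\lambda([0,1]\setminus A)\le\epsilon$ and $f|_A$ continuous), with pointwise operations and the topology of convergence in measure, whose identity neighbourhood basis consists of $N(U,\epsilon)=\{f:\lambda(\{x: f(x)\notin U\})<\epsilon\}$, $U$ an open identity neighbourhood in $G$, $\epsilon>0$. For $n\ge1$, $h_n\colon G^n\to L^0(G)$ sends $(g_1,\dots,g_n)$ to the map constantly $g_j$ on $[(j-1)/n,j/n)$, $j=1,\dots,n$. For $i\in\{1,\dots,n\}$ and $a\in G^{n-1}$, $c_{i,a}\colon G\to G^n$,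 $x\mapsto(a_1,\dots,a_{i-1},x,a_i,\dots,a_{n-1})$. *)

theory Defs
  imports "HOL-Analysis.Analysis"
begin

text \<open>Topological groups are modelled by the (not necessarily commutative) type class
  topological_group_add, written additively: x y^-1 becomes x - y = x + (- y).\<close>

definition right_close :: "'a::topological_group_add set \<Rightarrow> 'a \<Rightarrow> 'a \<Rightarrow> bool" where
  "right_close U x y \<longleftrightarrow> x - y \<in> U"

definition RUCb :: "('a::topological_group_add \<Rightarrow> real) set" where
  "RUCb = {f. bounded (range f) \<and>
     (\<forall>e>0. \<exists>U. open U \<and> 0 \<in> U \<and> (\<forall>x y. right_close U x y \<longrightarrow> \<bar>f x - f y\<bar> \<le> e))}"

definition RUEB :: "('a::topological_group_add \<Rightarrow> real) set set" where
  "RUEB = {S. S \<subseteq> RUCb \<and> (\<exists>B. \<forall>f\<in>S. \<forall>x. \<bar>f x\<bar> \<le> B) \<and>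
     (\<forall>e>0. \<exists>U. open U \<and> 0 \<in> U \<and>
        (\<forall>f\<in>S. \<forall>x y. right_close U x y \<longrightarrow> \<bar>f x - f y\<bar> \<le> e))}"

text \<open>Strongly measurable maps [0,1] -> G (Lusin property).  Elements of L^0(G) are
  represented by such maps; a.e.-equal representatives are identified automatically by
  any uniformly continuous function.\<close>
definition strongly_measurable :: "(real \<Rightarrow> 'a::topological_space) \<Rightarrow> bool" where
  "strongly_measurable f \<longleftrightarrow> (\<forall>e>0. \<exists>A. closed A \<and> A \<subseteq> {0..1} \<and>
      measure lebesgue ({0..1} - A) \<le> e \<and> continuous_on A f)"

definition L0 :: "(real \<Rightarrow> 'a::topological_group_add) set" where
  "L0 = {f. strongly_measurable f}"

definition Nbhd :: "'a::topological_group_add set \<Rightarrow> real \<Rightarrow> (real \<Rightarrow> 'a) set" where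
  "Nbhd U e = {f. measure lebesgue {x\<in>{0..1}. f x \<notin> U} < e}"

definition L0_close :: "'a::topological_group_add set \<Rightarrow> real \<Rightarrow> (real \<Rightarrow> 'a) \<Rightarrow> (real \<Rightarrow> 'a) \<Rightarrow> bool" where
  "L0_close U e f g \<longleftrightarrow> (\<lambda>x. f x - g x) \<in> Nbhd U e"

definition RUCb_L0 :: "((real \<Rightarrow> 'a::topological_group_add) \<Rightarrow> real) set" where
  "RUCb_L0 = {F. bounded (F ` L0) \<and>
     (\<forall>d>0. \<exists>U e. open U \<and> 0 \<in> U \<and> e > 0 \<and>
        (\<forall>f\<in>L0. \<forall>g\<in>L0. L0_close U e f g \<longrightarrow> \<bar>F f - F g\<bar> \<le> d))}"

definition RUEB_L0 :: "((real \<Rightarrow> 'a::topological_group_add) \<Rightarrow> real) set set" where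
  "RUEB_L0 = {S. S \<subseteq> RUCb_L0 \<and> (\<exists>B. \<forall>F\<in>S. \<forall>f\<in>L0. \<bar>F f\<bar> \<le> B) \<and>
     (\<forall>d>0. \<exists>U e. open U \<and> 0 \<in> U \<and> e > 0 \<and>
        (\<forall>F\<in>S. \<forall>f\<in>L0. \<forall>g\<in>L0. L0_close U e f g \<longrightarrow> \<bar>F f - F g\<bar> \<le> d))}"

text \<open>h_n: G^n -> L^0(G); an element of G^n is a list of length n, g ! (j-1) = g_j.
  The map is constantly g_j on [(j-1)/n, j/n); the value outside [0,1) is irrelevant.\<close>
definition hn :: "nat \<Rightarrow> 'a::topological_group_add list \<Rightarrow> real \<Rightarrow> 'a" where
  "hn n g t = (if 0 \<le> t \<and> t < 1 then g ! nat \<lfloor>t * real n\<rfloor> else 0)"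

text \<open>c_{i,a}: G -> G^n, inserting x at position i (1-based) into a in G^(n-1).\<close>
definition cia :: "nat \<Rightarrow> 'a list \<Rightarrow> 'a \<Rightarrow> 'a list" where
  "cia i a x = take (i - 1) a @ [x] @ drop (i - 1) a"

definition bracket :: "((real \<Rightarrow> 'a::topological_group_add) \<Rightarrow> real) set \<Rightarrow> ('a \<Rightarrow> real) set" where
  "bracket H = {F \<circ> hn n \<circ> cia i a | F n i a.
      F \<in> H \<and> n \<ge> 1 \<and> 1 \<le> i \<and> i \<le> n \<and> length a = n - 1}"

end

theory Submission
  imports Defs
begin

text \<open>The maps \<open>h\<^sub>n \<circ> c\<^sub>i\<^sub>,\<^sub>a\<close> are step functions, so they land in \<open>L\<^sup>0(G)\<close>, and they are
  pointwise contractions for the right uniformity: at every time the values of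
  \<open>h\<^sub>n(c\<^sub>i\<^sub>,\<^sub>a x)\<close> and \<open>h\<^sub>n(c\<^sub>i\<^sub>,\<^sub>a y)\<close> either coincide or are \<open>x\<close> and \<open>y\<close>.  Hence \<open>x y\<^sup>-\<^sup>1 \<in> U\<close>
  forces \<open>h\<^sub>n(c\<^sub>i\<^sub>,\<^sub>a x) h\<^sub>n(c\<^sub>i\<^sub>,\<^sub>a y)\<^sup>-\<^sup>1 \<in> N(U,\<epsilon>)\<close> for every \<open>\<epsilon>\<close>, and the uniform bound and
  modulus of equicontinuity of \<open>H\<close> transfer verbatim to \<open>[H]\<close>.\<close>

lemma continuous_on_if_uniformly_locally_constant:
  fixes f :: "'a::metric_space \<Rightarrow> 'b::topological_space"
  assumes "d > 0" and "\<And>s t. s \<in> A \<Longrightarrow> t \<in> A \<Longrightarrow> dist s t < d \<Longrightarrow> f s = f t"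
  shows "continuous_on A f"
  unfolding continuous_on_topological
proof (intro ballI allI impI)
  fix t B assume "t \<in> A" "open B" "f t \<in> B"
  have "f s \<in> B" if "s \<in> A" "s \<in> ball t d" for s
    using assms(2)[OF \<open>t \<in> A\<close> that(1)] that(2) \<open>f t \<in> B\<close> by simp
  then show "\<exists>V. open V \<and> t \<in> V \<and> (\<forall>s\<in>A. s \<in> V \<longrightarrow> f s \<in> B)"
    using \<open>d > 0\<close> by (intro exI[of _ "ball t d"]) auto
qed

lemma measure_UN_intervals_le:
  fixes c :: "'i \<Rightarrow> real"
  assumes "finite I" "d \<ge> 0"
  shows "measure lebesgue (\<Union>k\<in>I. {c k - d .. c k + d}) \<le> real (card I) * (2 * d)"
proof -
  have "measure lebesgue (\<Union>k\<in>I. {c k - d .. c k + d})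
      \<le> (\<Sum>k\<in>I. measure lebesgue {c k - d .. c k + d})"
    using assms by (intro measure_UNION_le) auto
  also have "\<dots> = real (card I) * (2 * d)"
    using assms by simp
  finally show ?thesis .
qed

lemma floor_mult_neq_imp_grid_point_between:
  fixes s t :: real
  assumes "0 \<le> s" "s < t" "t < 1" "\<lfloor>s * real n\<rfloor> \<noteq> \<lfloor>t * real n\<rfloor>"
  shows "\<exists>k\<in>{1..n}. s < real k / real n \<and> real k / real n \<le> t"
proof -
  have n: "n > 0"
    using assms by (cases n) auto
  have "\<lfloor>s * real n\<rfloor> \<le> \<lfloor>t * real n\<rfloor>"
    using assms by (intro floor_mono mult_right_mono) auto
  then have less: "\<lfloor>s * real n\<rfloor> < \<lfloor>t * real n\<rfloor>"
    using assms(4) by simp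
  moreover have "0 \<le> \<lfloor>s * real n\<rfloor>"
    using assms(1) by simp
  ultimately have "1 \<le> \<lfloor>t * real n\<rfloor>"
    by linarith
  define k where "k = nat \<lfloor>t * real n\<rfloor>"
  have k: "real k = of_int \<lfloor>t * real n\<rfloor>"
    using \<open>1 \<le> \<lfloor>t * real n\<rfloor>\<close> by (simp add: k_def)
  have "s < real k / real n"
    using less k n by (simp add: field_simps floor_less_iff)
  moreover have "real k / real n \<le> t"
    using k n by (simp add: field_simps)
  moreover have "1 \<le> k"
    using \<open>1 \<le> \<lfloor>t * real n\<rfloor>\<close> unfolding k_def by (simp only: le_nat_iff)
  moreover have "real k < real n"
    using k assms(3) n by (smt (verit) of_int_floor_le mult_less_cancel_right2 of_nat_0_less_iff)
  ultimately show ?thesis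
    by (intro bexI[of _ k]) auto
qed

text \<open>Off the \<open>\<delta>\<close>-neighbourhoods of the grid points \<open>k/n\<close>, which have total measure
  at most \<open>2n\<delta>\<close>, the step function \<open>h\<^sub>n g\<close> is constant on \<open>\<delta>\<close>-close points.\<close>

lemma hn_in_L0:
  assumes n: "n \<ge> 1"
  shows "hn n g \<in> L0"
  unfolding L0_def strongly_measurable_def
proof (intro CollectI allI impI)
  fix e :: real assume "e > 0"
  define d where "d = e / (2 * real n)"
  have d: "d > 0"
    using \<open>e > 0\<close> n by (simp add: d_def)
  define N where "N = (\<Union>k\<in>{1..n}. {real k / real n - d <..< real k / real n + d})"
  define A where "A = {0..1} - N"
  have "closed A"
    unfolding A_def N_def by (intro closed_Diff open_UN) auto
  have "{0..1} - A \<subseteq> (\<Union>k\<in>{1..n}. {real k / real n - d .. real k / real n + d})"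
    unfolding A_def N_def by fastforce
  then have "measure lebesgue ({0..1} - A)
      \<le> measure lebesgue (\<Union>k\<in>{1..n}. {real k / real n - d .. real k / real n + d})"
    using \<open>closed A\<close> by (intro measure_mono_fmeasurable lmeasurable_compact compact_UN) auto
  also have "\<dots> \<le> e"
    using measure_UN_intervals_le[of "{1..n}" d "\<lambda>k. real k / real n"] d n
    by (simp add: d_def)
  finally have "measure lebesgue ({0..1} - A) \<le> e" .
  have in_unit: "0 \<le> t \<and> t < 1" if "t \<in> A" for t
  proof -
    have "{1 - d <..< 1 + d} \<subseteq> N"
      using UN_upper[of n "{1..n}" "\<lambda>k. {real k / real n - d <..< real k / real n + d}"] n
      unfolding N_def by simp
    then have "t \<notin> {1 - d <..< 1 + d}"
      using that n unfolding A_def by blast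
    then show ?thesis
      using that d unfolding A_def by auto
  qed
  have floor_eq: "\<lfloor>s * real n\<rfloor> = \<lfloor>t * real n\<rfloor>"
    if st: "s \<in> A" "t \<in> A" "s < t" "t - s < d" for s t
  proof (rule ccontr)
    assume "\<lfloor>s * real n\<rfloor> \<noteq> \<lfloor>t * real n\<rfloor>"
    then obtain k where "k \<in> {1..n}" "s < real k / real n" "real k / real n \<le> t"
      using floor_mult_neq_imp_grid_point_between[of s t n] in_unit st by auto
    then have "t \<in> {real k / real n - d <..< real k / real n + d}"
      using st d by auto
    with \<open>k \<in> {1..n}\<close> have "t \<in> N"
      unfolding N_def by blast
    then show False
      using st unfolding A_def by auto
  qed
  have "continuous_on A (hn n g)"
  proof (rule continuous_on_if_uniformly_locally_constant[OF d])
    fix s t assume "s \<in> A" "t \<in> A" "dist s t < d"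
    then have "\<bar>s - t\<bar> < d"
      by (simp add: dist_real_def)
    consider "s < t" | "s = t" | "t < s"
      by linarith
    then have "\<lfloor>s * real n\<rfloor> = \<lfloor>t * real n\<rfloor>"
    proof cases
      case 1
      then show ?thesis
        using \<open>s \<in> A\<close> \<open>t \<in> A\<close> \<open>\<bar>s - t\<bar> < d\<close> by (intro floor_eq) auto
    next
      case 3
      then show ?thesis
        using \<open>s \<in> A\<close> \<open>t \<in> A\<close> \<open>\<bar>s - t\<bar> < d\<close> by (intro floor_eq[symmetric]) auto
    qed simp
    then show "hn n g s = hn n g t"
      using in_unit \<open>s \<in> A\<close> \<open>t \<in> A\<close> by (simp add: hn_def)
  qed
  moreover have "A \<subseteq> {0..1}"
    unfolding A_def by blast
  ultimately show "\<exists>A. closed A \<and> A \<subseteq> {0..1} \<and> measure lebesgue ({0..1} - A) \<le> e \<and>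
      continuous_on A (hn n g)"
    using \<open>closed A\<close> \<open>measure lebesgue ({0..1} - A) \<le> e\<close> by blast
qed

lemma nth_cia_cases:
  "cia i a x ! k = cia i a y ! k \<or> (cia i a x ! k = x \<and> cia i a y ! k = y)"
  unfolding cia_def by (auto simp: nth_append nth_Cons split: nat.splits)

lemma hn_cia_diff_mem:
  assumes "0 \<in> U" "x - y \<in> U"
  shows "hn n (cia i a x) t - hn n (cia i a y) t \<in> U"
  using nth_cia_cases[of i a x "nat \<lfloor>t * real n\<rfloor>" y] assms by (auto simp: hn_def)

lemma L0_close_if_pointwise:
  assumes "e > 0" and "\<And>t. t \<in> {0..1} \<Longrightarrow> f t - g t \<in> U"
  shows "L0_close U e f g"
proof -
  have "{t \<in> {0..1}. f t - g t \<notin> U} = {}"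
    using assms(2) by blast
  then show ?thesis
    using assms(1) unfolding L0_close_def Nbhd_def by (simp only: mem_Collect_eq measure_empty)
qed

lemma RUEB_I:
  assumes bound: "\<And>f x. f \<in> S \<Longrightarrow> \<bar>f x\<bar> \<le> B"
    and equicont: "\<And>d. d > 0 \<Longrightarrow> \<exists>U. open U \<and> 0 \<in> U \<and>
        (\<forall>f\<in>S. \<forall>x y. right_close U x y \<longrightarrow> \<bar>f x - f y\<bar> \<le> d)"
  shows "S \<in> RUEB"
proof -
  have "S \<subseteq> RUCb"
  proof
    fix f assume "f \<in> S"
    have "bounded (range f)"
      unfolding bounded_real using bound[OF \<open>f \<in> S\<close>] by blast
    moreover have "\<forall>d>0. \<exists>U. open U \<and> 0 \<in> U \<and>
        (\<forall>x y. right_close U x y \<longrightarrow> \<bar>f x - f y\<bar> \<le> d)"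
      using equicont \<open>f \<in> S\<close> by meson
    ultimately show "f \<in> RUCb"
      unfolding RUCb_def by blast
  qed
  moreover have "\<exists>B. \<forall>f\<in>S. \<forall>x. \<bar>f x\<bar> \<le> B"
    using bound by blast
  ultimately show ?thesis
    using equicont unfolding RUEB_def by blast
qed

lemma bracket_bounded:
  assumes "\<And>F f. F \<in> H \<Longrightarrow> f \<in> L0 \<Longrightarrow> \<bar>F f\<bar> \<le> B" and "\<phi> \<in> bracket H"
  shows "\<bar>\<phi> x\<bar> \<le> B"
proof -
  obtain F n i a where "\<phi> = F \<circ> hn n \<circ> cia i a" "F \<in> H" "n \<ge> 1"
    using assms(2) unfolding bracket_def by blast
  then show ?thesis
    using assms(1)[OF _ hn_in_L0] by simp
qed

lemma bracket_modulus:
  assumes "0 \<in> U" "e > 0"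
    and modulus: "\<forall>F\<in>H. \<forall>f\<in>L0. \<forall>g\<in>L0. L0_close U e f g \<longrightarrow> \<bar>F f - F g\<bar> \<le> d"
    and "\<phi> \<in> bracket H" "right_close U x y"
  shows "\<bar>\<phi> x - \<phi> y\<bar> \<le> d"
proof -
  obtain F n i a where "\<phi> = F \<circ> hn n \<circ> cia i a" "F \<in> H" "n \<ge> 1"
    using assms(4) unfolding bracket_def by blast
  moreover have "L0_close U e (hn n (cia i a x)) (hn n (cia i a y))"
    using assms by (intro L0_close_if_pointwise hn_cia_diff_mem) (auto simp: right_close_def)
  moreover have "hn n (cia i a x) \<in> L0" "hn n (cia i a y) \<in> L0"
    using \<open>n \<ge> 1\<close> by (simp_all add: hn_in_L0)
  ultimately show ?thesis
    using modulus by simp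
qed

theorem lemma4p3:
  fixes H :: "((real \<Rightarrow> 'a::topological_group_add) \<Rightarrow> real) set"
  assumes "H \<in> RUEB_L0"
  shows "bracket H \<in> RUEB"
proof -
  obtain B where "\<And>F f. F \<in> H \<Longrightarrow> f \<in> L0 \<Longrightarrow> \<bar>F f\<bar> \<le> B"
    using assms unfolding RUEB_L0_def by blast
  then have bound: "\<And>\<phi> x. \<phi> \<in> bracket H \<Longrightarrow> \<bar>\<phi> x\<bar> \<le> B"
    by (rule bracket_bounded)
  have equicont: "\<exists>U. open U \<and> 0 \<in> U \<and>
      (\<forall>\<phi>\<in>bracket H. \<forall>x y. right_close U x y \<longrightarrow> \<bar>\<phi> x - \<phi> y\<bar> \<le> d)" if "d > 0" for d
  proof -
    obtain U e where "open U" "0 \<in> U" "e > 0"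
      and modulus: "\<forall>F\<in>H. \<forall>f\<in>L0. \<forall>g\<in>L0. L0_close U e f g \<longrightarrow> \<bar>F f - F g\<bar> \<le> d"
      using assms \<open>d > 0\<close> unfolding RUEB_L0_def by blast
    moreover have "\<forall>\<phi>\<in>bracket H. \<forall>x y. right_close U x y \<longrightarrow> \<bar>\<phi> x - \<phi> y\<bar> \<le> d"
      using bracket_modulus[OF \<open>0 \<in> U\<close> \<open>e > 0\<close> modulus] by blast
    ultimately show ?thesis
      by blast
  qed
  show ?thesis
    using bound equicont by (rule RUEB_I)
qed

end
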